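(* For every integer $m\geq 3$ there exists a $2$-quasigroup $\psi$ of order $2m+1$ on $\Sigma=\{0,1,\dots,2m\}$ such that for each $i\in\{0,\dots,m-1\}$, $\psi$ has $m$ $\{2i,2i+1\}$-components, and all of these $\{2i,2i+1\}$-components except one have the form $\{2j,2j+1\}\times\{2l,2l+1\}$ for some $j,l\in\{0,\dots,m-1\}$.
   Context: A $2$-quasigroup (binary quasigroup) of order $k$ on $\Sigma$, $|\Sigma|=k$, is a function $f:\Sigma^2\to\Sigma$ such that fixing either argument yields a bijection $\Sigma\to\Sigma$ in the other. For distinct $a,b\in\Sigma$, an $\{a,b\}$-component of an $n$-ary quasigroup $f:\Sigma^n\to\Sigma$ is a set $S\subset\Sigma^n$ such that (1) $f(S)=\{a,b\}$, and (2) the function obtained from $f$ by replacing the value $a$ by $b$ and $b$ by $a$ at all points of $S$ (and leaving $f$ unchanged outside $S$) is again an $n$-ary quasigroup. *)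

theory Defs
  imports Main
begin

definition quasigroup2 :: "'a set \<Rightarrow> ('a \<Rightarrow> 'a \<Rightarrow> 'a) \<Rightarrow> bool" where
  "quasigroup2 \<Sigma> f \<longleftrightarrow>
     (\<forall>x\<in>\<Sigma>. bij_betw (\<lambda>y. f x y) \<Sigma> \<Sigma>) \<and>
     (\<forall>y\<in>\<Sigma>. bij_betw (\<lambda>x. f x y) \<Sigma> \<Sigma>)"

definition switch_on :: "('a \<times> 'a) set \<Rightarrow> 'a \<Rightarrow> 'a \<Rightarrow> ('a \<Rightarrow> 'a \<Rightarrow> 'a) \<Rightarrow> ('a \<Rightarrow> 'a \<Rightarrow> 'a)" where
  "switch_on S a b f = (\<lambda>x y. if (x, y) \<in> S then
       (if f x y = a then b else if f x y = b then a else f x y) else f x y)"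

definition is_component :: "'a set \<Rightarrow> ('a \<Rightarrow> 'a \<Rightarrow> 'a) \<Rightarrow> 'a \<Rightarrow> 'a \<Rightarrow> ('a \<times> 'a) set \<Rightarrow> bool" where
  "is_component \<Sigma> f a b S \<longleftrightarrow>
     S \<subseteq> \<Sigma> \<times> \<Sigma> \<and> (\<lambda>(x, y). f x y) ` S = {a, b} \<and>
     quasigroup2 \<Sigma> (switch_on S a b f)"

text \<open>The components of a quasigroup are counted as the minimal (indecomposable)
  ones: no proper subset is again a component.\<close>
definition is_min_component :: "'a set \<Rightarrow> ('a \<Rightarrow> 'a \<Rightarrow> 'a) \<Rightarrow> 'a \<Rightarrow> 'a \<Rightarrow> ('a \<times> 'a) set \<Rightarrow> bool" where
  "is_min_component \<Sigma> f a b S \<longleftrightarrow>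
     is_component \<Sigma> f a b S \<and> (\<forall>T. T \<subset> S \<longrightarrow> \<not> is_component \<Sigma> f a b T)"

end

theory Submission
  imports Defs "HOL-Combinatorics.Transposition"
begin

text \<open>Start from a Latin square L of order m with a transversal, the cells (j, c j). Replace every
  cell (j, l) by a 2 x 2 subsquare on the symbols 2 L j l and 2 L j l + 1; in the blocks on the
  transversal put the new symbol 2m on the diagonal and move the two displaced symbols into a new
  last row and column. A set of {a,b}-cells can be switched iff it is closed under passing to
  {a,b}-cells in the same row or column, so the minimal {a,b}-components are the classes of the
  {a,b}-cells under this connectivity. For the pair {2i, 2i+1} these are the m - 1 blocks over
  the cells of L carrying i off the transversal, and one class of six cells: the two off-diagonal
  cells of the transversal block carrying i together with the four cells in the new row and
  column that carry 2i and 2i+1. Such L exist for all m \<noteq> 2: the cyclic group for odd m, and for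
  even m its prolongation along the diagonal.\<close>

section \<open>Components of binary quasigroups\<close>

definition line_closed :: "'a set \<Rightarrow> ('a \<Rightarrow> 'a \<Rightarrow> 'a) \<Rightarrow> 'a \<Rightarrow> 'a \<Rightarrow> ('a \<times> 'a) set \<Rightarrow> bool" where
  "line_closed \<Sigma> f a b S \<longleftrightarrow>
    (\<forall>x y y'. (x, y) \<in> S \<longrightarrow> y' \<in> \<Sigma> \<longrightarrow> f x y' \<in> {a, b} \<longrightarrow> (x, y') \<in> S) \<and>
    (\<forall>x x' y. (x, y) \<in> S \<longrightarrow> x' \<in> \<Sigma> \<longrightarrow> f x' y \<in> {a, b} \<longrightarrow> (x', y) \<in> S)"

lemma line_closed_rowD:
  "line_closed \<Sigma> f a b S \<Longrightarrow> (x, y) \<in> S \<Longrightarrow> y' \<in> \<Sigma> \<Longrightarrow> f x y' \<in> {a, b} \<Longrightarrow> (x, y') \<in> S"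
  unfolding line_closed_def by blast

lemma line_closed_colD:
  "line_closed \<Sigma> f a b S \<Longrightarrow> (x, y) \<in> S \<Longrightarrow> x' \<in> \<Sigma> \<Longrightarrow> f x' y \<in> {a, b} \<Longrightarrow> (x', y) \<in> S"
  unfolding line_closed_def by blast

lemma switch_on_eq: "switch_on S a b f x y = (if (x, y) \<in> S then transpose a b (f x y) else f x y)"
  by (simp add: switch_on_def transpose_def)

text \<open>A line meeting a line-closed S in an {a,b}-cell is switched at all its {a,b}-cells,
  so along it the switched function is the original one followed by the transposition of a and b.\<close>
lemma bij_betw_switched_line:
  assumes bij: "bij_betw g \<Sigma> \<Sigma>" and ab: "a \<in> \<Sigma>" "b \<in> \<Sigma>"
    and closed: "\<And>y y'. y \<in> \<Sigma> \<Longrightarrow> y' \<in> \<Sigma> \<Longrightarrow> y \<in> T \<Longrightarrow> g y \<in> {a, b} \<Longrightarrow> g y' \<in> {a, b} \<Longrightarrow> y' \<in> T"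
  shows "bij_betw (\<lambda>y. if y \<in> T then transpose a b (g y) else g y) \<Sigma> \<Sigma>"
proof (cases "\<exists>y0\<in>\<Sigma>. y0 \<in> T \<and> g y0 \<in> {a, b}")
  case True
  then obtain y0 where y0: "y0 \<in> \<Sigma>" "y0 \<in> T" "g y0 \<in> {a, b}" by blast
  have "(if y \<in> T then transpose a b (g y) else g y) = (transpose a b \<circ> g) y" if "y \<in> \<Sigma>" for y
  proof (cases "g y \<in> {a, b}")
    case True
    with closed[OF y0(1) that y0(2,3)] show ?thesis by simp
  qed (auto simp: transpose_def)
  moreover have "bij_betw (transpose a b \<circ> g) \<Sigma> \<Sigma>"
    by (rule bij_betw_trans[OF bij]) (simp add: ab)
  ultimately show ?thesis
    using bij_betw_cong[of \<Sigma> "\<lambda>y. if y \<in> T then transpose a b (g y) else g y" "transpose a b \<circ> g" \<Sigma>]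
    by blast
next
  case False
  then have "(if y \<in> T then transpose a b (g y) else g y) = g y" if "y \<in> \<Sigma>" for y
    using that by (auto simp: transpose_def)
  with bij show ?thesis
    using bij_betw_cong[of \<Sigma> "\<lambda>y. if y \<in> T then transpose a b (g y) else g y" g \<Sigma>]
    by blast
qed

lemma quasigroup2_switch_on:
  assumes q: "quasigroup2 \<Sigma> f" and ab: "a \<in> \<Sigma>" "b \<in> \<Sigma>" and closed: "line_closed \<Sigma> f a b S"
  shows "quasigroup2 \<Sigma> (switch_on S a b f)"
  unfolding quasigroup2_def switch_on_eq
proof (intro conjI ballI)
  fix x assume "x \<in> \<Sigma>"
  then have "bij_betw (f x) \<Sigma> \<Sigma>"
    using q by (simp add: quasigroup2_def)
  from bij_betw_switched_line[OF this ab, of "{y. (x, y) \<in> S}"]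
  show "bij_betw (\<lambda>y. if (x, y) \<in> S then transpose a b (f x y) else f x y) \<Sigma> \<Sigma>"
    using line_closed_rowD[OF closed] by simp
next
  fix y assume "y \<in> \<Sigma>"
  then have "bij_betw (\<lambda>x. f x y) \<Sigma> \<Sigma>"
    using q by (simp add: quasigroup2_def)
  from bij_betw_switched_line[OF this ab, of "{x. (x, y) \<in> S}"]
  show "bij_betw (\<lambda>x. if (x, y) \<in> S then transpose a b (f x y) else f x y) \<Sigma> \<Sigma>"
    using line_closed_colD[OF closed] by simp
qed

lemma line_closed_shared_lineD:
  assumes "line_closed \<Sigma> f a b S" "(x, y) \<in> S" "x = x' \<or> y = y'"
    and "x' \<in> \<Sigma>" "y' \<in> \<Sigma>" "f x' y' \<in> {a, b}"
  shows "(x', y') \<in> S"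
  using assms line_closed_rowD line_closed_colD by metis

lemma switched_line_closed:
  assumes "inj_on g \<Sigma>" and "inj_on (\<lambda>y. if y \<in> T then transpose a b (g y) else g y) \<Sigma>"
    and "y \<in> \<Sigma>" "y' \<in> \<Sigma>" "y \<in> T" "g y \<in> {a, b}" "g y' \<in> {a, b}"
  shows "y' \<in> T"
proof (rule ccontr)
  assume "y' \<notin> T"
  with assms(5) have "y \<noteq> y'" by blast
  with assms(1,3,4) have "g y \<noteq> g y'" by (meson inj_onD)
  with assms(6,7) have "transpose a b (g y) = g y'" by (auto simp: transpose_def)
  with assms(5) \<open>y' \<notin> T\<close>
  have "(if y \<in> T then transpose a b (g y) else g y) = (if y' \<in> T then transpose a b (g y') else g y')"
    by simp
  with inj_onD[OF assms(2) _ assms(3,4)] \<open>y \<noteq> y'\<close> show False by blast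
qed

lemma is_component_line_closed:
  assumes q: "quasigroup2 \<Sigma> f" and comp: "is_component \<Sigma> f a b S"
  shows "line_closed \<Sigma> f a b S"
proof -
  have sub: "S \<subseteq> \<Sigma> \<times> \<Sigma>" and img: "(\<lambda>(x, y). f x y) ` S = {a, b}"
    and q': "quasigroup2 \<Sigma> (switch_on S a b f)"
    using comp unfolding is_component_def by auto
  have val: "f x y \<in> {a, b}" if "(x, y) \<in> S" for x y
    using img that by force
  show ?thesis
    unfolding line_closed_def
  proof (intro conjI allI impI)
    fix x y y' assume xy: "(x, y) \<in> S" and y': "y' \<in> \<Sigma>" "f x y' \<in> {a, b}"
    have x: "x \<in> \<Sigma>" and y: "y \<in> \<Sigma>" using xy sub by auto
    have "inj_on (f x) \<Sigma>" "inj_on (\<lambda>y. if y \<in> {y. (x, y) \<in> S} then transpose a b (f x y) else f x y) \<Sigma>"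
      using q q' x by (simp_all add: quasigroup2_def switch_on_eq bij_betw_def)
    from switched_line_closed[OF this y y'(1) _ val[OF xy] y'(2)] xy
    show "(x, y') \<in> S" by simp
  next
    fix x x' y assume xy: "(x, y) \<in> S" and x': "x' \<in> \<Sigma>" "f x' y \<in> {a, b}"
    have x: "x \<in> \<Sigma>" and y: "y \<in> \<Sigma>" using xy sub by auto
    have "inj_on (\<lambda>x. f x y) \<Sigma>" "inj_on (\<lambda>x. if x \<in> {x. (x, y) \<in> S} then transpose a b (f x y) else f x y) \<Sigma>"
      using q q' y by (simp_all add: quasigroup2_def switch_on_eq bij_betw_def)
    from switched_line_closed[OF this x x'(1) _ val[OF xy] x'(2)] xy
    show "(x', y) \<in> S" by simp
  qed
qed

lemma image_eq_pair_if_two_in_row: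
  assumes "inj_on (f x) \<Sigma>" and "(\<lambda>(x, y). f x y) ` C \<subseteq> {a, b}"
    and "(x, y) \<in> C" "(x, y') \<in> C" "y \<noteq> y'" "y \<in> \<Sigma>" "y' \<in> \<Sigma>"
  shows "(\<lambda>(x, y). f x y) ` C = {a, b}"
proof -
  have "f x y \<noteq> f x y'"
    using assms(1,5-7) by (meson inj_onD)
  moreover have "f x y \<in> (\<lambda>(x, y). f x y) ` C" "f x y' \<in> (\<lambda>(x, y). f x y) ` C"
    using assms(3,4) by force+
  ultimately show ?thesis
    using assms(2) by blast
qed

lemma min_components_eqI:
  assumes q: "quasigroup2 \<Sigma> f" and ab: "a \<in> \<Sigma>" "b \<in> \<Sigma>"
    and comp: "\<And>C. C \<in> \<C> \<Longrightarrow>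
      C \<subseteq> \<Sigma> \<times> \<Sigma> \<and> (\<lambda>(x, y). f x y) ` C = {a, b} \<and> line_closed \<Sigma> f a b C"
    and connected: "\<And>C S. C \<in> \<C> \<Longrightarrow> line_closed \<Sigma> f a b S \<Longrightarrow> S \<inter> C \<noteq> {} \<Longrightarrow> C \<subseteq> S"
    and cover: "\<And>x y. x \<in> \<Sigma> \<Longrightarrow> y \<in> \<Sigma> \<Longrightarrow> f x y \<in> {a, b} \<Longrightarrow> \<exists>C\<in>\<C>. (x, y) \<in> C"
  shows "{S. is_min_component \<Sigma> f a b S} = \<C>"
proof -
  have is_comp: "is_component \<Sigma> f a b C" if "C \<in> \<C>" for C
    using comp[OF that] quasigroup2_switch_on[OF q ab] unfolding is_component_def by blast
  show ?thesis
  proof (intro equalityI subsetI)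
    fix S assume "S \<in> {S. is_min_component \<Sigma> f a b S}"
    then have S: "is_component \<Sigma> f a b S" and minS: "\<And>T. T \<subset> S \<Longrightarrow> \<not> is_component \<Sigma> f a b T"
      unfolding is_min_component_def by auto
    then have "S \<subseteq> \<Sigma> \<times> \<Sigma>" "(\<lambda>(x, y). f x y) ` S = {a, b}"
      unfolding is_component_def by auto
    then obtain x y where xy: "(x, y) \<in> S" "x \<in> \<Sigma>" "y \<in> \<Sigma>" "f x y \<in> {a, b}"
      by (smt (verit) SigmaE case_prod_conv image_iff insertI1 subsetD)
    then obtain C where C: "C \<in> \<C>" "(x, y) \<in> C"
      using cover by blast
    with xy(1) have "C \<subseteq> S"
      using connected[OF C(1) is_component_line_closed[OF q S]] by blast
    with minS[of C] is_comp[OF C(1)] have "C = S"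
      by blast
    with C(1) show "S \<in> \<C>"
      by simp
  next
    fix C assume C: "C \<in> \<C>"
    have "\<not> is_component \<Sigma> f a b T" if "T \<subset> C" for T
    proof
      assume T: "is_component \<Sigma> f a b T"
      then have "T \<noteq> {}"
        unfolding is_component_def by auto
      with that have "C \<subseteq> T"
        using connected[OF C is_component_line_closed[OF q T]] by blast
      with that show False by blast
    qed
    with is_comp[OF C] show "C \<in> {S. is_min_component \<Sigma> f a b S}"
      unfolding is_min_component_def by blast
  qed
qed

section \<open>Latin squares with a transversal\<close>

lemma bij_betw_if_inj_on_self:
  "finite A \<Longrightarrow> f ` A \<subseteq> A \<Longrightarrow> inj_on f A \<Longrightarrow> bij_betw f A A"
  by (simp add: bij_betw_def endo_inj_surj)

locale latin_transversal =
  fixes m :: nat and L :: "nat \<Rightarrow> nat \<Rightarrow> nat" and c ci :: "nat \<Rightarrow> nat"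
  assumes latin_row: "j < m \<Longrightarrow> bij_betw (L j) {..<m} {..<m}"
    and latin_col: "l < m \<Longrightarrow> bij_betw (\<lambda>j. L j l) {..<m} {..<m}"
    and c_lt: "j < m \<Longrightarrow> c j < m" and ci_lt: "l < m \<Longrightarrow> ci l < m"
    and c_ci: "l < m \<Longrightarrow> c (ci l) = l" and ci_c: "j < m \<Longrightarrow> ci (c j) = j"
    and transversal: "bij_betw (\<lambda>j. L j (c j)) {..<m} {..<m}"
begin

lemma L_lt: "j < m \<Longrightarrow> l < m \<Longrightarrow> L j l < m"
  using latin_row bij_betwE by blast

lemma L_row_eq_iff: "j < m \<Longrightarrow> l < m \<Longrightarrow> l' < m \<Longrightarrow> L j l = L j l' \<longleftrightarrow> l = l'"
  using latin_row[of j] by (auto simp: bij_betw_def dest: inj_onD)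

lemma L_col_eq_iff: "l < m \<Longrightarrow> j < m \<Longrightarrow> j' < m \<Longrightarrow> L j l = L j' l \<longleftrightarrow> j = j'"
  using latin_col[of l] by (auto simp: bij_betw_def dest: inj_onD)

lemma transversal_eq_iff: "j < m \<Longrightarrow> j' < m \<Longrightarrow> L j (c j) = L j' (c j') \<longleftrightarrow> j = j'"
  using transversal by (auto simp: bij_betw_def dest: inj_onD)

definition transversal_row :: "nat \<Rightarrow> nat" where
  "transversal_row i = the_inv_into {..<m} (\<lambda>j. L j (c j)) i"

definition symbol_col :: "nat \<Rightarrow> nat \<Rightarrow> nat" where
  "symbol_col j i = the_inv_into {..<m} (L j) i"

lemma transversal_row_lt_L: "i < m \<Longrightarrow> transversal_row i < m \<and> L (transversal_row i) (c (transversal_row i)) = i"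
  using bij_betwE[OF bij_betw_the_inv_into[OF transversal]] f_the_inv_into_f_bij_betw[OF transversal]
  unfolding transversal_row_def by auto

lemma transversal_row_L: "j < m \<Longrightarrow> transversal_row (L j (c j)) = j"
  using transversal the_inv_into_f_f[of "\<lambda>j. L j (c j)" "{..<m}" j]
  by (simp add: bij_betw_def transversal_row_def)

lemma symbol_col_lt_L: "j < m \<Longrightarrow> i < m \<Longrightarrow> symbol_col j i < m \<and> L j (symbol_col j i) = i"
  using bij_betwE[OF bij_betw_the_inv_into[OF latin_row]] f_the_inv_into_f_bij_betw[OF latin_row]
  unfolding symbol_col_def by auto

lemma symbol_col_L: "j < m \<Longrightarrow> l < m \<Longrightarrow> symbol_col j (L j l) = l"
  using latin_row[of j] by (simp add: bij_betw_def the_inv_into_f_f symbol_col_def)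

end

lemma inj_on_add_mod: "inj_on (\<lambda>l. (j + l) mod k) {..<k}" for j k :: nat
proof (rule linorder_inj_onI')
  fix l l' :: nat assume "l \<in> {..<k}" "l' \<in> {..<k}" "l < l'"
  then have "\<not> k dvd l' - l"
    using dvd_imp_le[of k "l' - l"] by auto
  then show "(j + l) mod k \<noteq> (j + l') mod k"
    using mod_eq_dvd_iff_nat[of "j + l" "j + l'" k] \<open>l < l'\<close> by (auto simp: eq_commute)
qed

lemma inj_on_double_add_mod:
  fixes a k :: nat
  assumes "odd k"
  shows "inj_on (\<lambda>j. (2 * j + a) mod k) {..<k}"
proof (rule linorder_inj_onI')
  fix j j' :: nat assume "j \<in> {..<k}" "j' \<in> {..<k}" "j < j'"
  then have "\<not> k dvd j' - j"
    using dvd_imp_le[of k "j' - j"] by auto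
  with assms have "\<not> k dvd (j' - j) * 2"
    by (simp add: coprime_dvd_mult_left_iff)
  then show "(2 * j + a) mod k \<noteq> (2 * j' + a) mod k"
    using mod_eq_dvd_iff_nat[of "2 * j + a" "2 * j' + a" k] \<open>j < j'\<close> by (auto simp: algebra_simps)
qed

lemma bij_betw_lessThan_if_inj_on:
  "(\<And>x. x < n \<Longrightarrow> f x < n) \<Longrightarrow> inj_on f {..<n} \<Longrightarrow> bij_betw f {..<n} {..<(n :: nat)}"
  by (rule bij_betw_if_inj_on_self) auto

lemma latin_transversal_cyclic:
  assumes "odd m"
  shows "latin_transversal m (\<lambda>j l. (j + l) mod m) id id"
proof
  have m: "0 < m" using assms by presburger
  show "bij_betw (\<lambda>l. (j + l) mod m) {..<m} {..<m}" for j
    using inj_on_add_mod m by (intro bij_betw_lessThan_if_inj_on) auto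
  show "bij_betw (\<lambda>j. (j + l) mod m) {..<m} {..<m}" for l
    using inj_on_add_mod[of l m] m by (intro bij_betw_lessThan_if_inj_on) (auto simp: add.commute)
  show "bij_betw (\<lambda>j. (j + id j) mod m) {..<m} {..<m}"
    using inj_on_double_add_mod[OF assms, of 0] m by (intro bij_betw_lessThan_if_inj_on) (auto simp: mult_2)
qed simp_all

text \<open>The addition table modulo an odd k has the diagonal as a transversal.\<close>
definition cyclic_prolongation :: "nat \<Rightarrow> nat \<Rightarrow> nat \<Rightarrow> nat" where
  "cyclic_prolongation k j l =
    (if j < k \<and> l < k then (if j = l then k else (j + l) mod k)
     else if j < k then (2 * j) mod k else if l < k then (2 * l) mod k else k)"

lemma cyclic_prolongation_commute: "cyclic_prolongation k j l = cyclic_prolongation k l j"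
  unfolding cyclic_prolongation_def by (auto simp: add.commute)

lemma cyclic_prolongation_le: "cyclic_prolongation k j l \<le> k"
  unfolding cyclic_prolongation_def using mod_less_divisor[of k] by (auto simp: less_imp_le)

lemma mod_neq_divisor:
  assumes "0 < k" shows "(a :: nat) mod k \<noteq> k"
  using mod_less_divisor[OF assms, of a] by auto

lemma cyclic_prolongation_row_inj:
  assumes k: "odd k" and j: "j \<le> k"
  shows "inj_on (cyclic_prolongation k j) {..<Suc k}"
proof (cases "j = k")
  case True
  have "inj_on (\<lambda>l. (2 * l) mod k) {..<k}"
    using inj_on_double_add_mod[OF k, of 0] by simp
  moreover have "cyclic_prolongation k j l = (if l = k then k else (2 * l) mod k)" if "l < Suc k" for l
    using True that by (auto simp: cyclic_prolongation_def)
  ultimately show ?thesis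
    using mod_neq_divisor[of k] odd_pos[OF k] unfolding inj_on_def
    by (metis lessThan_iff less_Suc_eq)
next
  case False
  then have "j < k" using j by simp
  define r where "r l = (if l = k then j else l)" for l
  have val: "cyclic_prolongation k j l = (if l = j then k else (j + r l) mod k)" if "l < Suc k" for l
    using \<open>j < k\<close> that by (auto simp: cyclic_prolongation_def r_def mult_2)
  show ?thesis
  proof (rule inj_onI)
    fix l l' assume l: "l \<in> {..<Suc k}" and l': "l' \<in> {..<Suc k}"
      and eq: "cyclic_prolongation k j l = cyclic_prolongation k j l'"
    show "l = l'"
    proof (cases "l = j \<or> l' = j")
      case True
      with eq val l l' mod_neq_divisor[OF odd_pos[OF k]] show ?thesis
        by (metis lessThan_iff)
    next
      case False
      then have "(j + r l) mod k = (j + r l') mod k"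
        using eq val l l' by simp
      moreover have "r l < k" "r l' < k"
        using l l' \<open>j < k\<close> by (auto simp: r_def)
      ultimately have "r l = r l'"
        using inj_on_add_mod[of j k] by (auto dest: inj_onD)
      with False l l' show ?thesis
        by (auto simp: r_def split: if_splits)
    qed
  qed
qed

lemma latin_transversal_cyclic_prolongation:
  assumes k: "odd k" "3 \<le> k"
  shows "latin_transversal (Suc k) (cyclic_prolongation k)
    (\<lambda>j. if Suc j < k then Suc j else if j < k then 0 else k)
    (\<lambda>l. if l = 0 then k - 1 else if l < k then l - 1 else k)"
    (is "latin_transversal _ _ ?c _")
proof
  show row: "bij_betw (cyclic_prolongation k j) {..<Suc k} {..<Suc k}" if "j < Suc k" for j
    using cyclic_prolongation_row_inj[OF k(1)] cyclic_prolongation_le that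
    by (intro bij_betw_lessThan_if_inj_on) (auto simp: less_Suc_eq_le)
  show "bij_betw (\<lambda>j. cyclic_prolongation k j l) {..<Suc k} {..<Suc k}" if "l < Suc k" for l
    using row[OF that] by (simp add: cyclic_prolongation_commute[of k _ l])
  have tv: "cyclic_prolongation k j (?c j) = (if j < k then (2 * j + 1) mod k else k)" if "j < Suc k" for j
  proof -
    have "(2 * j + 1) mod k = j" if "Suc j = k"
    proof -
      from that have "2 * j + 1 = j + k" by arith
      then have "(2 * j + 1) mod k = (j + k) mod k" by (rule arg_cong)
      also have "\<dots> = j" using that by (simp only: mod_add_self2) (simp add: mod_less)
      finally show ?thesis .
    qed
    then show ?thesis
      using \<open>j < Suc k\<close> k by (auto simp: cyclic_prolongation_def mult_2)
  qed
  have "inj_on (\<lambda>j. (2 * j + 1) mod k) {..<k}"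
    by (rule inj_on_double_add_mod[OF k(1)])
  then have "inj_on (\<lambda>j. if j < k then (2 * j + 1) mod k else k) {..<Suc k}"
    using mod_neq_divisor[of k] k unfolding inj_on_def by (metis lessThan_iff less_Suc_eq less_imp_le_nat not_le odd_pos)
  then have "bij_betw (\<lambda>j. if j < k then (2 * j + 1) mod k else k) {..<Suc k} {..<Suc k}"
    using odd_pos[OF k(1)] by (intro bij_betw_lessThan_if_inj_on) (auto simp: less_Suc_eq_le)
  then show "bij_betw (\<lambda>j. cyclic_prolongation k j (?c j)) {..<Suc k} {..<Suc k}"
    using tv bij_betw_cong[of "{..<Suc k}" "\<lambda>j. cyclic_prolongation k j (?c j)"] by simp
qed (use k in auto)

lemma latin_transversal_exists:
  assumes "0 < m" "m \<noteq> 2"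
  shows "\<exists>L c ci. latin_transversal m L c ci"
proof (cases "odd m")
  case True
  then show ?thesis
    using latin_transversal_cyclic by blast
next
  case False
  with assms have "odd (m - 1)" "3 \<le> m - 1"
    by presburger+
  moreover have "Suc (m - 1) = m"
    using assms by simp
  ultimately show ?thesis
    using latin_transversal_cyclic_prolongation[of "m - 1"] by metis
qed

section \<open>The doubled prolongation\<close>

lemma double_add_mod_div [simp]: "(2 * a + b mod 2) div 2 = (a :: nat)"
  by arith

lemma double_add_mod_mod [simp]: "(2 * a + b mod 2) mod 2 = (b :: nat) mod 2"
  by arith

lemma double_add_mod_neq_double [simp]: "a < n \<Longrightarrow> 2 * a + b mod 2 \<noteq> 2 * (n :: nat)"
  by arith

definition block :: "nat \<Rightarrow> nat \<Rightarrow> (nat \<times> nat) set" where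
  "block j l = {2 * j, 2 * j + 1} \<times> {2 * l, 2 * l + 1}"

lemma mem_block_iff: "(x, y) \<in> block j l \<longleftrightarrow> x div 2 = j \<and> y div 2 = l"
  unfolding block_def by auto

lemma symbol_pair_iff: "(v :: nat) \<in> {2 * i, 2 * i + 1} \<longleftrightarrow> v div 2 = i"
  by auto

context latin_transversal
begin

text \<open>Index 2m is the new element; 2j and 2j + 1 form the block over j.\<close>
definition psi :: "nat \<Rightarrow> nat \<Rightarrow> nat" where
  "psi x y =
    (if x = 2 * m \<and> y = 2 * m then 2 * m
     else if x = 2 * m then 2 * L (ci (y div 2)) (y div 2) + y mod 2
     else if y = 2 * m then 2 * L (x div 2) (c (x div 2)) + (x + 1) mod 2
     else if y div 2 = c (x div 2) then
       (if x mod 2 = y mod 2 then 2 * m else 2 * L (x div 2) (y div 2) + x mod 2)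
     else 2 * L (x div 2) (y div 2) + (x + y) mod 2)"

lemma psi_row_inj:
  assumes x: "x < 2 * m"
  shows "inj_on (psi x) {0..2 * m}"
proof (rule inj_on_inverseI)
  define j where "j = x div 2"
  have j: "j < m" using x by (simp add: j_def)
  let ?g = "\<lambda>v. if v = 2 * m then 2 * c j + x mod 2
    else if v div 2 = L j (c j) then (if v mod 2 = (x + 1) mod 2 then 2 * m else 2 * c j + (x + 1) mod 2)
    else 2 * symbol_col j (v div 2) + (v + x) mod 2"
  fix y assume "y \<in> {0..2 * m}"
  then consider "y = 2 * m" | "y < 2 * m" "y div 2 = c j" | "y < 2 * m" "y div 2 \<noteq> c j"
    by fastforce
  then show "?g (psi x y) = y"
  proof cases
    case 1
    have "L j (c j) < m" using L_lt[OF j c_lt[OF j]] .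
    with 1 x show ?thesis
      by (simp add: psi_def j_def[symmetric])
  next
    case 2
    have "L j (c j) < m" using L_lt[OF j c_lt[OF j]] .
    have y_eq: "2 * c j + y mod 2 = y" using 2 by presburger
    show ?thesis
    proof (cases "x mod 2 = y mod 2")
      case True
      with 2 x have "?g (psi x y) = 2 * c j + y mod 2"
        by (simp add: psi_def j_def[symmetric])
      with y_eq show ?thesis by simp
    next
      case False
      then have "(x + 1) mod 2 = y mod 2" "x mod 2 \<noteq> (x + 1) mod 2" by presburger+
      with 2 x \<open>L j (c j) < m\<close> have "?g (psi x y) = 2 * c j + y mod 2"
        by (simp add: psi_def j_def[symmetric])
      with y_eq show ?thesis by simp
    qed
  next
    case 3
    have l: "y div 2 < m" using 3 by simp
    have "L j (y div 2) < m" using L_lt[OF j l] .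
    moreover have "L j (y div 2) \<noteq> L j (c j)" using 3 L_row_eq_iff[OF j l c_lt[OF j]] by simp
    moreover have "symbol_col j (L j (y div 2)) = y div 2"
      using symbol_col_L[OF j l] .
    moreover have "(2 * L j (y div 2) + (x + y) mod 2 + x) mod 2 = y mod 2"
      by (cases "even x"; cases "even y") (auto simp: mod2_eq_if)
    ultimately have "?g (psi x y) = 2 * (y div 2) + y mod 2"
      using 3 x by (simp add: psi_def j_def[symmetric])
    then show ?thesis by simp
  qed
qed

lemma psi_last_row_inj: "inj_on (psi (2 * m)) {0..2 * m}"
proof (rule inj_on_inverseI)
  let ?g = "\<lambda>v. if v = 2 * m then 2 * m else 2 * c (transversal_row (v div 2)) + v mod 2"
  fix y assume y: "y \<in> {0..2 * m}"
  show "?g (psi (2 * m) y) = y"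
  proof (cases "y = 2 * m")
    case False
    then have l: "y div 2 < m" using y by auto
    then have "L (ci (y div 2)) (y div 2) < m" "c (ci (y div 2)) = y div 2"
      using L_lt ci_lt c_ci by auto
    moreover have "transversal_row (L (ci (y div 2)) (y div 2)) = ci (y div 2)"
      using transversal_row_L[OF ci_lt[OF l]] c_ci[OF l] by simp
    ultimately have "?g (psi (2 * m) y) = 2 * (y div 2) + y mod 2"
      using False by (simp add: psi_def)
    then show ?thesis by simp
  qed (simp add: psi_def)
qed

lemma psi_last_col_inj: "inj_on (\<lambda>x. psi x (2 * m)) {0..2 * m}"
proof (rule inj_on_inverseI)
  let ?g = "\<lambda>v. if v = 2 * m then 2 * m else 2 * transversal_row (v div 2) + (v + 1) mod 2"
  fix x assume x: "x \<in> {0..2 * m}"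
  show "?g (psi x (2 * m)) = x"
  proof (cases "x = 2 * m")
    case False
    then have j: "x div 2 < m" using x by auto
    then have "L (x div 2) (c (x div 2)) < m"
      using L_lt c_lt by auto
    moreover have "(2 * L (x div 2) (c (x div 2)) + (x + 1) mod 2 + 1) mod 2 = x mod 2"
      by (cases "even x") (auto simp: mod2_eq_if)
    ultimately have "?g (psi x (2 * m)) = 2 * (x div 2) + x mod 2"
      using False transversal_row_L[OF j] by (simp add: psi_def)
    then show ?thesis by simp
  qed (simp add: psi_def)
qed

lemma psi_col_inj:
  assumes y: "y < 2 * m"
  shows "inj_on (\<lambda>x. psi x y) {0..2 * m}"
proof (rule inj_on_inverseI)
  define l where "l = y div 2"
  define k where "k = ci l"
  have l: "l < m" and k: "k < m" and ck: "c k = l" using y ci_lt c_ci by (auto simp: l_def k_def)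
  have Lkl: "L k l < m" using L_lt[OF k l] .
  let ?g = "\<lambda>v. if v = 2 * m then 2 * k + y mod 2
    else if v div 2 = L k l then (if v mod 2 = y mod 2 then 2 * m else 2 * k + (y + 1) mod 2)
    else 2 * the_inv_into {..<m} (\<lambda>j. L j l) (v div 2) + (v + y) mod 2"
  fix x assume "x \<in> {0..2 * m}"
  then consider "x = 2 * m" | "x < 2 * m" "x div 2 = k" | "x < 2 * m" "x div 2 \<noteq> k"
    by fastforce
  then show "?g (psi x y) = x"
  proof cases
    case 1
    with y Lkl show ?thesis
      by (simp add: psi_def l_def[symmetric] k_def[symmetric])
  next
    case 2
    have x_eq: "2 * k + x mod 2 = x" using 2 by presburger
    show ?thesis
    proof (cases "x mod 2 = y mod 2")
      case True
      with 2 y ck have "?g (psi x y) = 2 * k + x mod 2"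
        by (simp add: psi_def l_def[symmetric])
      with x_eq show ?thesis by simp
    next
      case False
      then have "(y + 1) mod 2 = x mod 2" "x mod 2 \<noteq> y mod 2" by presburger+
      with 2 y ck Lkl have "?g (psi x y) = 2 * k + x mod 2"
        by (simp add: psi_def l_def[symmetric])
      with x_eq show ?thesis by simp
    qed
  next
    case 3
    have j: "x div 2 < m" using 3 by simp
    have "l \<noteq> c (x div 2)" using 3 ci_c[OF j] by (auto simp: k_def)
    moreover have "L (x div 2) l < m" using L_lt[OF j l] .
    moreover have "L (x div 2) l \<noteq> L k l" using 3 L_col_eq_iff[OF l j k] by simp
    moreover have "the_inv_into {..<m} (\<lambda>j. L j l) (L (x div 2) l) = x div 2"
      using latin_col[OF l] j the_inv_into_f_f[of "\<lambda>j. L j l" "{..<m}" "x div 2"]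
      by (simp add: bij_betw_def)
    moreover have "(2 * L (x div 2) l + (x + y) mod 2 + y) mod 2 = x mod 2"
      by (cases "even x"; cases "even y") (auto simp: mod2_eq_if)
    ultimately have "?g (psi x y) = 2 * (x div 2) + x mod 2"
      using 3 y by (simp add: psi_def l_def[symmetric])
    then show ?thesis by simp
  qed
qed

lemma psi_le:
  assumes "x \<le> 2 * m" "y \<le> 2 * m"
  shows "psi x y \<le> 2 * m"
proof -
  have le: "a < m \<Longrightarrow> 2 * a + b mod 2 \<le> 2 * m" for a b :: nat
    by arith
  have x: "x \<noteq> 2 * m \<Longrightarrow> x div 2 < m" and y: "y \<noteq> 2 * m \<Longrightarrow> y div 2 < m"
    using assms by auto
  show ?thesis
    using le[OF L_lt[OF ci_lt[OF y] y]] le[OF L_lt[OF x c_lt[OF x]]] le[OF L_lt[OF x y]]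
    by (simp add: psi_def)
qed

theorem quasigroup2_psi: "quasigroup2 {0..2 * m} psi"
  unfolding quasigroup2_def
proof (intro conjI ballI)
  fix x assume "x \<in> {0..2 * m}"
  then have "inj_on (psi x) {0..2 * m}"
    using psi_row_inj psi_last_row_inj by (cases "x = 2 * m") auto
  then show "bij_betw (\<lambda>y. psi x y) {0..2 * m} {0..2 * m}"
    using psi_le \<open>x \<in> {0..2 * m}\<close> by (intro bij_betw_if_inj_on_self) auto
next
  fix y assume "y \<in> {0..2 * m}"
  then have "inj_on (\<lambda>x. psi x y) {0..2 * m}"
    using psi_col_inj psi_last_col_inj by (cases "y = 2 * m") auto
  then show "bij_betw (\<lambda>x. psi x y) {0..2 * m} {0..2 * m}"
    using psi_le \<open>y \<in> {0..2 * m}\<close> by (intro bij_betw_if_inj_on_self) auto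
qed

section \<open>Components of the doubled prolongation\<close>

text \<open>Consecutive cells share alternately a row and a column, closing up to a six-cycle.\<close>
definition hexagon :: "nat \<Rightarrow> (nat \<times> nat) set" where
  "hexagon i = (let j = transversal_row i; l = c (transversal_row i) in
     {(2 * j, 2 * l + 1), (2 * j, 2 * m), (2 * j + 1, 2 * m),
      (2 * j + 1, 2 * l), (2 * m, 2 * l), (2 * m, 2 * l + 1)})"

context
  fixes i :: nat
  assumes i: "i < m"
begin

lemma transversal_row_lt: "transversal_row i < m" and L_transversal_row: "L (transversal_row i) (c (transversal_row i)) = i"
  using transversal_row_lt_L[OF i] by auto

lemma symbol_col_lt: "j < m \<Longrightarrow> symbol_col j i < m" and L_symbol_col: "j < m \<Longrightarrow> L j (symbol_col j i) = i"
  using symbol_col_lt_L[OF _ i] by auto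

lemma symbol_col_inj: "j < m \<Longrightarrow> j' < m \<Longrightarrow> symbol_col j i = symbol_col j' i \<Longrightarrow> j = j'"
  using L_col_eq_iff[OF symbol_col_lt] L_symbol_col by metis

lemma L_c_eq_iff: "j < m \<Longrightarrow> L j (c j) = i \<longleftrightarrow> j = transversal_row i"
  using transversal_eq_iff[OF _ transversal_row_lt] L_transversal_row by auto

lemma symbol_col_ne_c: "j < m \<Longrightarrow> j \<noteq> transversal_row i \<Longrightarrow> symbol_col j i \<noteq> c j"
  using L_c_eq_iff L_symbol_col by force

lemma symbol_col_ne_c_transversal_row: "j < m \<Longrightarrow> j \<noteq> transversal_row i \<Longrightarrow> symbol_col j i \<noteq> c (transversal_row i)"
  using L_col_eq_iff[OF c_lt[OF transversal_row_lt] _ transversal_row_lt] L_symbol_col L_transversal_row by metis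

lemma psi_hexagon: "(x, y) \<in> hexagon i \<Longrightarrow> psi x y div 2 = i"
proof -
  have "2 * transversal_row i + 1 < 2 * m" "2 * c (transversal_row i) + 1 < 2 * m"
    using transversal_row_lt c_lt[OF transversal_row_lt] by auto
  then show "(x, y) \<in> hexagon i \<Longrightarrow> psi x y div 2 = i"
    using ci_c[OF transversal_row_lt] L_transversal_row by (auto simp: hexagon_def psi_def Let_def)
qed

lemma hexagon_div: "(x, y) \<in> hexagon i \<Longrightarrow>
    (x div 2 = transversal_row i \<or> x div 2 = m) \<and> (y div 2 = c (transversal_row i) \<or> y div 2 = m)"
  by (auto simp: hexagon_def Let_def)

lemma psi_block:
  assumes "j < m" "j \<noteq> transversal_row i" "(x, y) \<in> block j (symbol_col j i)"
  shows "psi x y div 2 = i"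
proof -
  have "x div 2 = j" "y div 2 = symbol_col j i"
    using assms(3) by (auto simp: mem_block_iff)
  moreover have "x < 2 * m" "y < 2 * m"
    using calculation assms(1) symbol_col_lt[OF assms(1)] by auto
  ultimately show ?thesis
    using L_symbol_col[OF assms(1)] symbol_col_ne_c[OF assms(1,2)] by (simp add: psi_def)
qed

lemma mem_hexagon_iff: "(x, y) \<in> hexagon i \<longleftrightarrow>
    (x = 2 * m \<and> y div 2 = c (transversal_row i)) \<or> (x div 2 = transversal_row i \<and> y = 2 * m) \<or>
    (x div 2 = transversal_row i \<and> y div 2 = c (transversal_row i) \<and> x mod 2 \<noteq> y mod 2)"
proof -
  have "a div 2 = k \<longleftrightarrow> a = 2 * k \<or> a = 2 * k + 1" for a k :: nat
    by arith
  moreover have "transversal_row i < m" "c (transversal_row i) < m"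
    using transversal_row_lt c_lt by auto
  ultimately show ?thesis
    unfolding hexagon_def Let_def by auto
qed

lemma pair_cell_cases:
  assumes x: "x \<le> 2 * m" and y: "y \<le> 2 * m" and v: "psi x y div 2 = i"
  shows "(x, y) \<in> hexagon i \<or> (\<exists>j<m. j \<noteq> transversal_row i \<and> (x, y) \<in> block j (symbol_col j i))"
proof -
  consider "x = 2 * m" "y = 2 * m" | "x = 2 * m" "y < 2 * m" | "x < 2 * m" "y = 2 * m"
    | "x < 2 * m" "y < 2 * m" "y div 2 = c (x div 2)" | "x < 2 * m" "y < 2 * m" "y div 2 \<noteq> c (x div 2)"
    using x y by linarith
  then show ?thesis
  proof cases
    case 1
    with v i show ?thesis by (simp add: psi_def)
  next
    case 2
    define l where "l = y div 2"
    have l: "l < m" using 2 by (simp add: l_def)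
    with 2 v have "L (ci l) (c (ci l)) = i"
      by (simp add: psi_def c_ci l_def)
    then have "l = c (transversal_row i)"
      using L_c_eq_iff[OF ci_lt[OF l]] c_ci[OF l] by simp
    with 2 show ?thesis
      by (simp add: mem_hexagon_iff l_def)
  next
    case 3
    then have "x div 2 = transversal_row i"
      using v L_c_eq_iff[of "x div 2"] by (simp add: psi_def)
    with 3 show ?thesis
      by (simp add: mem_hexagon_iff)
  next
    case 4
    have j: "x div 2 < m" using 4 by simp
    have "x mod 2 \<noteq> y mod 2"
      using 4 v i by (auto simp: psi_def)
    moreover from this have "x div 2 = transversal_row i"
      using 4 v L_c_eq_iff[OF j] by (simp add: psi_def)
    ultimately show ?thesis
      using 4 by (simp add: mem_hexagon_iff)
  next
    case 5
    have j: "x div 2 < m" and l: "y div 2 < m" using 5 by auto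
    have "L (x div 2) (y div 2) = i"
      using 5 v by (simp add: psi_def)
    then have "y div 2 = symbol_col (x div 2) i"
      using L_row_eq_iff[OF j l symbol_col_lt[OF j]] L_symbol_col[OF j] by simp
    moreover have "x div 2 \<noteq> transversal_row i"
      using 5 \<open>L (x div 2) (y div 2) = i\<close> L_row_eq_iff[OF j l c_lt[OF j]] L_c_eq_iff[OF j] by auto
    ultimately show ?thesis
      using j by (auto simp: mem_block_iff)
  qed
qed

lemma hexagon_subset: "hexagon i \<subseteq> {0..2 * m} \<times> {0..2 * m}"
  using transversal_row_lt c_lt[OF transversal_row_lt] by (auto simp: hexagon_def Let_def)

lemma block_subset: "j < m \<Longrightarrow> block j (symbol_col j i) \<subseteq> {0..2 * m} \<times> {0..2 * m}"
  using symbol_col_lt[of j] by (auto simp: block_def)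

lemma hexagon_line_closed: "line_closed {0..2 * m} psi (2 * i) (2 * i + 1) (hexagon i)"
  unfolding line_closed_def symbol_pair_iff
proof (intro conjI allI impI)
  fix x y y' assume xy: "(x, y) \<in> hexagon i" and y': "y' \<in> {0..2 * m}" "psi x y' div 2 = i"
  have "x \<le> 2 * m" using xy hexagon_subset by auto
  moreover have "y' \<le> 2 * m" using y'(1) by simp
  ultimately have "(x, y') \<in> hexagon i \<or> (\<exists>k<m. k \<noteq> transversal_row i \<and> (x, y') \<in> block k (symbol_col k i))"
    using pair_cell_cases y'(2) by blast
  then show "(x, y') \<in> hexagon i"
  proof (elim disjE exE conjE)
    fix j assume "j < m" "j \<noteq> transversal_row i" "(x, y') \<in> block j (symbol_col j i)"
    with hexagon_div[OF xy] show ?thesis by (auto simp: mem_block_iff)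
  qed simp_all
next
  fix x x' y assume xy: "(x, y) \<in> hexagon i" and x': "x' \<in> {0..2 * m}" "psi x' y div 2 = i"
  have "y \<le> 2 * m" using xy hexagon_subset by auto
  moreover have "x' \<le> 2 * m" using x'(1) by simp
  ultimately have "(x', y) \<in> hexagon i \<or> (\<exists>k<m. k \<noteq> transversal_row i \<and> (x', y) \<in> block k (symbol_col k i))"
    using pair_cell_cases x'(2) by blast
  then show "(x', y) \<in> hexagon i"
  proof (elim disjE exE conjE)
    fix j assume j: "j < m" "j \<noteq> transversal_row i" and "(x', y) \<in> block j (symbol_col j i)"
    then have "y div 2 = symbol_col j i" by (simp add: mem_block_iff)
    with hexagon_div[OF xy] symbol_col_lt[OF j(1)] symbol_col_ne_c_transversal_row[OF j] show ?thesis by auto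
  qed simp_all
qed

lemma block_line_closed:
  assumes j: "j < m" "j \<noteq> transversal_row i"
  shows "line_closed {0..2 * m} psi (2 * i) (2 * i + 1) (block j (symbol_col j i))"
  unfolding line_closed_def symbol_pair_iff
proof (intro conjI allI impI)
  fix x y y' assume xy: "(x, y) \<in> block j (symbol_col j i)" and y': "y' \<in> {0..2 * m}" "psi x y' div 2 = i"
  have x: "x div 2 = j" using xy by (simp add: mem_block_iff)
  then have "x \<le> 2 * m" using j(1) by auto
  moreover have "y' \<le> 2 * m" using y'(1) by simp
  ultimately have "(x, y') \<in> hexagon i \<or> (\<exists>k<m. k \<noteq> transversal_row i \<and> (x, y') \<in> block k (symbol_col k i))"
    using pair_cell_cases y'(2) by blast
  then show "(x, y') \<in> block j (symbol_col j i)"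
  proof (elim disjE exE conjE)
    assume "(x, y') \<in> hexagon i"
    with hexagon_div x j show ?thesis by auto
  next
    fix k assume "(x, y') \<in> block k (symbol_col k i)"
    with x show ?thesis by (simp add: mem_block_iff)
  qed
next
  fix x x' y assume xy: "(x, y) \<in> block j (symbol_col j i)" and x': "x' \<in> {0..2 * m}" "psi x' y div 2 = i"
  have y: "y div 2 = symbol_col j i" using xy by (simp add: mem_block_iff)
  then have "y \<le> 2 * m" using symbol_col_lt[OF j(1)] by auto
  moreover have "x' \<le> 2 * m" using x'(1) by simp
  ultimately have "(x', y) \<in> hexagon i \<or> (\<exists>k<m. k \<noteq> transversal_row i \<and> (x', y) \<in> block k (symbol_col k i))"
    using pair_cell_cases x'(2) by blast
  then show "(x', y) \<in> block j (symbol_col j i)"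
  proof (elim disjE exE conjE)
    assume "(x', y) \<in> hexagon i"
    with hexagon_div y symbol_col_lt[OF j(1)] symbol_col_ne_c_transversal_row[OF j] show ?thesis by fastforce
  next
    fix k assume "k < m" "(x', y) \<in> block k (symbol_col k i)"
    with y symbol_col_inj[OF _ j(1)] show ?thesis by (simp add: mem_block_iff)
  qed
qed

lemma hexagon_connected:
  assumes S: "line_closed {0..2 * m} psi (2 * i) (2 * i + 1) S" and meet: "S \<inter> hexagon i \<noteq> {}"
  shows "hexagon i \<subseteq> S"
proof -
  define j where "j = transversal_row i"
  define l where "l = c j"
  have hex: "hexagon i = {(2 * j, 2 * l + 1), (2 * j, 2 * m), (2 * j + 1, 2 * m),
      (2 * j + 1, 2 * l), (2 * m, 2 * l), (2 * m, 2 * l + 1)}"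
    by (simp add: hexagon_def Let_def j_def l_def)
  have step: "(x', y') \<in> S" if "(x, y) \<in> S" "(x', y') \<in> hexagon i" "x = x' \<or> y = y'" for x y x' y'
    using line_closed_shared_lineD[OF S that(1,3)] that(2) hexagon_subset psi_hexagon symbol_pair_iff
    by blast
  have "(2 * j, 2 * l + 1) \<in> S \<Longrightarrow> (2 * j, 2 * m) \<in> S"
    and "(2 * j, 2 * m) \<in> S \<Longrightarrow> (2 * j + 1, 2 * m) \<in> S"
    and "(2 * j + 1, 2 * m) \<in> S \<Longrightarrow> (2 * j + 1, 2 * l) \<in> S"
    and "(2 * j + 1, 2 * l) \<in> S \<Longrightarrow> (2 * m, 2 * l) \<in> S"
    and "(2 * m, 2 * l) \<in> S \<Longrightarrow> (2 * m, 2 * l + 1) \<in> S"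
    and "(2 * m, 2 * l + 1) \<in> S \<Longrightarrow> (2 * j, 2 * l + 1) \<in> S"
    by (erule step; simp add: hex)+
  with meet show ?thesis
    unfolding hex by blast
qed

lemma block_connected:
  assumes j: "j < m" "j \<noteq> transversal_row i"
    and S: "line_closed {0..2 * m} psi (2 * i) (2 * i + 1) S" and meet: "S \<inter> block j (symbol_col j i) \<noteq> {}"
  shows "block j (symbol_col j i) \<subseteq> S"
proof
  obtain x y where xy: "(x, y) \<in> S" "(x, y) \<in> block j (symbol_col j i)"
    using meet by auto
  fix p assume p: "p \<in> block j (symbol_col j i)"
  then obtain x' y' where p_eq: "p = (x', y')" by (cases p)
  have in_pair: "psi u v \<in> {2 * i, 2 * i + 1}" if "(u, v) \<in> block j (symbol_col j i)" for u v
    using psi_block[OF j that] symbol_pair_iff by blast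
  have "(x, y') \<in> block j (symbol_col j i)" "(x', y') \<in> block j (symbol_col j i)"
    using xy(2) p p_eq by (auto simp: mem_block_iff)
  then have "(x, y') \<in> S"
    using line_closed_shared_lineD[OF S xy(1)] block_subset[OF j(1)] in_pair by blast
  then have "(x', y') \<in> S"
    using line_closed_shared_lineD[OF S] \<open>(x', y') \<in> block j (symbol_col j i)\<close> block_subset[OF j(1)] in_pair
    by blast
  with p_eq show "p \<in> S" by simp
qed

lemma hexagon_image: "(\<lambda>(x, y). psi x y) ` hexagon i = {2 * i, 2 * i + 1}"
proof (rule image_eq_pair_if_two_in_row)
  show "inj_on (psi (2 * transversal_row i)) {0..2 * m}"
    using psi_row_inj transversal_row_lt by simp
  show "(\<lambda>(x, y). psi x y) ` hexagon i \<subseteq> {2 * i, 2 * i + 1}"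
    using psi_hexagon by (auto simp flip: symbol_pair_iff)
  show "(2 * transversal_row i, 2 * c (transversal_row i) + 1) \<in> hexagon i" "(2 * transversal_row i, 2 * m) \<in> hexagon i"
    by (simp_all add: hexagon_def Let_def)
  show "2 * c (transversal_row i) + 1 \<noteq> 2 * m" "2 * c (transversal_row i) + 1 \<in> {0..2 * m}" "2 * m \<in> {0..2 * m}"
    using c_lt[OF transversal_row_lt] by auto
qed

lemma block_image:
  assumes j: "j < m" "j \<noteq> transversal_row i"
  shows "(\<lambda>(x, y). psi x y) ` block j (symbol_col j i) = {2 * i, 2 * i + 1}"
proof (rule image_eq_pair_if_two_in_row)
  show "inj_on (psi (2 * j)) {0..2 * m}"
    using psi_row_inj j by simp
  show "(\<lambda>(x, y). psi x y) ` block j (symbol_col j i) \<subseteq> {2 * i, 2 * i + 1}"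
    using psi_block[OF j] by (auto simp flip: symbol_pair_iff)
  show "(2 * j, 2 * symbol_col j i) \<in> block j (symbol_col j i)" "(2 * j, 2 * symbol_col j i + 1) \<in> block j (symbol_col j i)"
    by (simp_all add: block_def)
  show "2 * symbol_col j i \<noteq> 2 * symbol_col j i + 1" "2 * symbol_col j i \<in> {0..2 * m}" "2 * symbol_col j i + 1 \<in> {0..2 * m}"
    using symbol_col_lt[OF j(1)] by auto
qed

lemma min_components_psi:
  "{S. is_min_component {0..2 * m} psi (2 * i) (2 * i + 1) S} =
    insert (hexagon i) ((\<lambda>j. block j (symbol_col j i)) ` ({..<m} - {transversal_row i}))"
proof (rule min_components_eqI[OF quasigroup2_psi])
  show "2 * i \<in> {0..2 * m}" "2 * i + 1 \<in> {0..2 * m}"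
    using i by auto
  fix C assume "C \<in> insert (hexagon i) ((\<lambda>j. block j (symbol_col j i)) ` ({..<m} - {transversal_row i}))"
  then consider "C = hexagon i" | j where "j < m" "j \<noteq> transversal_row i" "C = block j (symbol_col j i)"
    by auto
  note cases = this
  show "C \<subseteq> {0..2 * m} \<times> {0..2 * m} \<and> (\<lambda>(x, y). psi x y) ` C = {2 * i, 2 * i + 1} \<and>
      line_closed {0..2 * m} psi (2 * i) (2 * i + 1) C"
    using hexagon_subset hexagon_image hexagon_line_closed block_subset block_image block_line_closed
    by (cases rule: cases) blast+
  fix S assume "line_closed {0..2 * m} psi (2 * i) (2 * i + 1) S" "S \<inter> C \<noteq> {}"
  then show "C \<subseteq> S"
    using hexagon_connected block_connected by (cases rule: cases) blast+
next
  fix x y assume "x \<in> {0..2 * m}" "y \<in> {0..2 * m}" "psi x y \<in> {2 * i, 2 * i + 1}"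
  then show "\<exists>C\<in>insert (hexagon i) ((\<lambda>j. block j (symbol_col j i)) ` ({..<m} - {transversal_row i})). (x, y) \<in> C"
    using pair_cell_cases[of x y] symbol_pair_iff by auto
qed

lemma hexagon_ne_block: "l < m \<Longrightarrow> hexagon i \<noteq> block j l"
proof -
  have "(2 * transversal_row i, 2 * m) \<in> hexagon i"
    by (simp add: hexagon_def Let_def)
  then show "l < m \<Longrightarrow> hexagon i \<noteq> block j l"
    by (auto simp: mem_block_iff)
qed

lemma card_min_components_psi:
  "card {S. is_min_component {0..2 * m} psi (2 * i) (2 * i + 1) S} = m"
proof -
  have "hexagon i \<notin> (\<lambda>j. block j (symbol_col j i)) ` ({..<m} - {transversal_row i})"
    using hexagon_ne_block symbol_col_lt by blast
  moreover have "inj_on (\<lambda>j. block j (symbol_col j i)) ({..<m} - {transversal_row i})"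
  proof (rule inj_onI)
    fix j j' assume "block j (symbol_col j i) = block j' (symbol_col j' i)"
    moreover have "(2 * j, 2 * symbol_col j i) \<in> block j (symbol_col j i)"
      by (simp add: block_def)
    ultimately show "j = j'"
      by (simp add: mem_block_iff)
  qed
  moreover have "card ({..<m} - {transversal_row i}) = m - 1"
    using transversal_row_lt by simp
  ultimately show ?thesis
    unfolding min_components_psi using i by (simp add: card_image)
qed

lemma min_components_psi_blocks_but_one:
  "\<exists>S0. is_min_component {0..2 * m} psi (2 * i) (2 * i + 1) S0 \<and> \<not> (\<exists>j<m. \<exists>l<m. S0 = block j l) \<and>
     (\<forall>S. is_min_component {0..2 * m} psi (2 * i) (2 * i + 1) S \<and> S \<noteq> S0 \<longrightarrow> (\<exists>j<m. \<exists>l<m. S = block j l))"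
proof (intro exI[of _ "hexagon i"] conjI allI impI)
  show "is_min_component {0..2 * m} psi (2 * i) (2 * i + 1) (hexagon i)"
    using min_components_psi by auto
  show "\<not> (\<exists>j<m. \<exists>l<m. hexagon i = block j l)"
    using hexagon_ne_block by blast
  fix S assume "is_min_component {0..2 * m} psi (2 * i) (2 * i + 1) S \<and> S \<noteq> hexagon i"
  then have "S \<in> (\<lambda>j. block j (symbol_col j i)) ` ({..<m} - {transversal_row i})"
    using min_components_psi by auto
  then show "\<exists>j<m. \<exists>l<m. S = block j l"
    using symbol_col_lt by auto
qed

end

end

theorem proposition5:
  fixes m :: nat
  assumes "m \<ge> 3"
  shows "\<exists>\<psi> :: nat \<Rightarrow> nat \<Rightarrow> nat.
    quasigroup2 {0..2*m} \<psi> \<and>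
    (\<forall>i<m.
       card {S. is_min_component {0..2*m} \<psi> (2*i) (2*i+1) S} = m \<and>
       (\<exists>S0. is_min_component {0..2*m} \<psi> (2*i) (2*i+1) S0 \<and>
          \<not> (\<exists>j<m. \<exists>l<m. S0 = {2*j, 2*j+1} \<times> {2*l, 2*l+1}) \<and>
          (\<forall>S. is_min_component {0..2*m} \<psi> (2*i) (2*i+1) S \<and> S \<noteq> S0 \<longrightarrow>
             (\<exists>j<m. \<exists>l<m. S = {2*j, 2*j+1} \<times> {2*l, 2*l+1}))))"
proof -
  from assms obtain L c ci where "latin_transversal m L c ci"
    using latin_transversal_exists[of m] by auto
  then interpret latin_transversal m L c ci .
  show ?thesis
  proof (intro exI[of _ psi] conjI allI impI)
    show "quasigroup2 {0..2 * m} psi"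
      by (rule quasigroup2_psi)
    fix i assume "i < m"
    then show "card {S. is_min_component {0..2 * m} psi (2 * i) (2 * i + 1) S} = m"
      by (rule card_min_components_psi)
    from min_components_psi_blocks_but_one[OF \<open>i < m\<close>]
    show "\<exists>S0. is_min_component {0..2 * m} psi (2 * i) (2 * i + 1) S0 \<and>
        \<not> (\<exists>j<m. \<exists>l<m. S0 = {2 * j, 2 * j + 1} \<times> {2 * l, 2 * l + 1}) \<and>
        (\<forall>S. is_min_component {0..2 * m} psi (2 * i) (2 * i + 1) S \<and> S \<noteq> S0 \<longrightarrow>
          (\<exists>j<m. \<exists>l<m. S = {2 * j, 2 * j + 1} \<times> {2 * l, 2 * l + 1}))"
      unfolding block_def .
  qed
qed

end
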